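(* Let $\mathcal A(v)=\int_1^\infty\frac{L(u)\,\ell(u,v)}{u^2-v^2}\,du$ for $0<v<1$. Let $\delta>0$ with $2\delta<1$, and let $\chi_0\in C_c^\infty([0,1))$ satisfy $\chi_0(v)=1$ for $0\le v\le\delta$ and $\chi_0(v)=0$ for $v\ge2\delta$. Then $$\mathcal A(v)=2\log2\,\chi_0(v)\log\frac1v+g(v)\qquad\text{with } g\in W^{1,1}(0,1).$$
   Context: For $u>1$ let $L(u)=\log\frac{u+1}{u-1}$, and for $u\ge1$, $0<v\le1$ let $\ell(u,v)=\log\frac{1}{uv}$. $W^{1,1}(0,1)$ is the Sobolev space of integrable functions with integrable weak derivative. *)

theory Defs
  imports "HOL-Analysis.Analysis"
begin

definition L :: "real \<Rightarrow> real" where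
  "L u = ln ((u + 1) / (u - 1))"

definition ell :: "real \<Rightarrow> real \<Rightarrow> real" where
  "ell u v = ln (1 / (u * v))"

definition calA :: "real \<Rightarrow> real" where
  "calA v = (LINT u:{1<..}|lborel. L u * ell u v / (u\<^sup>2 - v\<^sup>2))"

definition smooth_on :: "real set \<Rightarrow> (real \<Rightarrow> real) \<Rightarrow> bool" where
  "smooth_on S f \<longleftrightarrow> (\<forall>n. \<forall>x\<in>S. ((deriv ^^ n) f) differentiable (at x))"

definition test_fun01 :: "(real \<Rightarrow> real) \<Rightarrow> bool" where
  "test_fun01 \<phi> \<longleftrightarrow> smooth_on UNIV \<phi> \<and>
     (\<exists>a b. 0 < a \<and> a \<le> b \<and> b < 1 \<and> (\<forall>x. x \<notin> {a..b} \<longrightarrow> \<phi> x = 0))"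

definition W11_01 :: "(real \<Rightarrow> real) \<Rightarrow> bool" where
  "W11_01 g \<longleftrightarrow> set_integrable lborel {0<..<1} g \<and>
     (\<exists>h. set_integrable lborel {0<..<1} h \<and>
        (\<forall>\<phi>. test_fun01 \<phi> \<longrightarrow>
           (LINT x:{0<..<1}|lborel. g x * deriv \<phi> x) = - (LINT x:{0<..<1}|lborel. h x * \<phi> x)))"

end

theory Submission
  imports Defs "HOL-Real_Asymp.Real_Asymp"
begin

(*
  Expanding 1/(u^2 - v^2) as a geometric series in v^2/u^2 gives, for 0 < v < 1,
    calA v = ln(1/v) P(v^2) - Q(v^2),
  where P and Q are power series whose coefficients, the moments of L(u) and L(u) ln u
  against u^(-2k-2) on (1, oo), are nonnegative and bounded; moreover
  P(0) = int_1^oo L(u)/u^2 du = 2 log 2.  Near 0 the function of the theorem is therefore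
  -Q(v^2) + ln(1/v) (P(v^2) - P(0)), a bounded decreasing C^1 function plus a bounded
  increasing one (for v < 1/2 the increase follows from P(y) - P(0) <= y P'(y)).
  Away from 0 it is calA itself, which is bounded and decreasing because the kernel
  ell(u,v)/(u^2 - v^2) decreases in v.  A bounded monotone C^1 function on an open
  interval has an integrable derivative, and a C^1 function on (0,1) that is integrable
  together with its derivative is weakly differentiable.
*)

section \<open>Functions with an integrable classical derivative\<close>

lemma set_integrable_bounded_continuous:
  fixes f :: "real \<Rightarrow> real"
  assumes "continuous_on {a<..<b} f" and "\<And>x. x \<in> {a<..<b} \<Longrightarrow> \<bar>f x\<bar> \<le> B"
  shows "set_integrable lborel {a<..<b} f"
proof (rule set_integrable_bound[where f="\<lambda>_. B"])
  show "set_integrable lborel {a<..<b} (\<lambda>_. B)"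
    by (rule set_integrable_subset[OF borel_integrable_atLeastAtMost'[of a b]]) auto
  show "set_borel_measurable lborel {a<..<b} f"
    unfolding set_borel_measurable_def
    using borel_measurable_continuous_on_indicator[OF _ assms(1)] by simp
  show "AE x in lborel. x \<in> {a<..<b} \<longrightarrow> norm (f x) \<le> norm B"
    using assms(2) by (intro AE_I2) (smt (verit) real_norm_def)
qed

lemma set_integrable_mult_bounded_continuous:
  fixes g p :: "real \<Rightarrow> real"
  assumes g: "set_integrable lborel A g" and A: "A \<in> sets lborel"
    and p: "continuous_on UNIV p" and B: "\<And>x. \<bar>p x\<bar> \<le> B"
  shows "set_integrable lborel A (\<lambda>x. g x * p x)"
proof (rule set_integrable_bound[where f="\<lambda>x. B * g x"])
  show "set_integrable lborel A (\<lambda>x. B * g x)" using g by simp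
  have "set_borel_measurable lborel A g"
    using g unfolding set_integrable_def set_borel_measurable_def by auto
  moreover have "p \<in> borel_measurable lborel"
    using p by (simp add: borel_measurable_continuous_onI)
  ultimately show "set_borel_measurable lborel A (\<lambda>x. g x * p x)"
    unfolding set_borel_measurable_def by (simp add: mult.assoc[symmetric] borel_measurable_times)
  show "AE x in lborel. x \<in> A \<longrightarrow> norm (g x * p x) \<le> norm (B * g x)"
  proof (intro AE_I2 impI)
    fix x
    have "\<bar>p x\<bar> \<le> \<bar>B\<bar>" using B[of x] by linarith
    then show "norm (g x * p x) \<le> norm (B * g x)" by (simp add: abs_mult mult.commute[of "\<bar>B\<bar>"] mult_left_mono)
  qed
qed

lemma continuous_compact_support_bounded:
  fixes f :: "real \<Rightarrow> real"
  assumes "continuous_on UNIV f" and "compact S" and "\<And>x. x \<notin> S \<Longrightarrow> f x = 0"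
  obtains B where "\<And>x. \<bar>f x\<bar> \<le> B"
proof -
  have "compact (f ` S)"
    by (intro compact_continuous_image continuous_on_subset[OF assms(1)] assms(2)) auto
  then obtain B where "\<forall>y\<in>f ` S. norm y \<le> B"
    using compact_imp_bounded bounded_iff by metis
  then have "\<bar>f x\<bar> \<le> max B 0" for x
    using assms(3)[of x] by (cases "x \<in> S") (auto simp: le_max_iff_disj)
  then show ?thesis using that by blast
qed

lemma C1_differentiable_on_cong:
  assumes "f C1_differentiable_on S" and "open S" and "\<And>x. x \<in> S \<Longrightarrow> f x = g x"
  shows "g C1_differentiable_on S"
proof -
  obtain D where "\<forall>x\<in>S. (f has_vector_derivative D x) (at x)" and "continuous_on S D"
    using assms(1) unfolding C1_differentiable_on_def by blast
  then show ?thesis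
    unfolding C1_differentiable_on_def
    using has_vector_derivative_transform_within_open[OF _ assms(2)] assms(3) by metis
qed

lemma smooth_on_has_derivative:
  assumes "smooth_on S f"
  shows "x \<in> S \<Longrightarrow> (f has_real_derivative deriv f x) (at x)" and "continuous_on S (deriv f)"
proof -
  have "((deriv ^^ n) f) differentiable (at x)" if "x \<in> S" for n x
    using assms that unfolding smooth_on_def by blast
  from this[of _ 0] this[of _ 1]
  show "x \<in> S \<Longrightarrow> (f has_real_derivative deriv f x) (at x)" and "continuous_on S (deriv f)"
    by (auto simp: DERIV_deriv_iff_real_differentiable continuous_at_imp_continuous_on
        differentiable_imp_continuous_within)
qed

lemma smooth_on_imp_C1_differentiable_on:
  assumes "smooth_on S f"
  shows "f C1_differentiable_on S"
  unfolding C1_differentiable_on_def has_real_derivative_iff_has_vector_derivative[symmetric]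
  using smooth_on_has_derivative[OF assms] by blast

lemma ln_inverse_C1_differentiable_on: "(\<lambda>v. ln (1 / v)) C1_differentiable_on {0<..}"
  unfolding C1_differentiable_on_def has_real_derivative_iff_has_vector_derivative[symmetric]
  by (intro exI[of _ "\<lambda>v. - 1 / v"] conjI ballI)
     (auto intro!: derivative_eq_intros continuous_intros simp: field_simps)

definition classical_W11_on :: "real set \<Rightarrow> (real \<Rightarrow> real) \<Rightarrow> bool" where
  "classical_W11_on S f \<longleftrightarrow> set_integrable lborel S f \<and>
     (\<exists>f'. (\<forall>x\<in>S. (f has_real_derivative f' x) (at x)) \<and> set_integrable lborel S f')"

lemma test_fun01_support:
  assumes "test_fun01 \<phi>"
  obtains a b where "0 < a" "a < b" "b < 1"
    and "\<And>x. x \<notin> {a<..<b} \<Longrightarrow> \<phi> x = 0 \<and> deriv \<phi> x = 0"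
proof -
  obtain a b where ab: "0 < a" "a \<le> b" "b < 1" and zero: "\<And>x. x \<notin> {a..b} \<Longrightarrow> \<phi> x = 0"
    using assms unfolding test_fun01_def by auto
  have deriv_zero: "deriv \<phi> x = 0" if "x \<notin> {a..b}" for x
  proof -
    have "(\<phi> has_real_derivative 0) (at x)"
      by (rule has_field_derivative_transform_within_open[of "\<lambda>_. 0" 0 x "- {a..b}"])
         (use that zero in auto)
    then show ?thesis by (rule DERIV_imp_deriv)
  qed
  show ?thesis
    by (rule that[of "a / 2" "(b + 1) / 2"]) (use ab zero deriv_zero in auto)
qed

lemma set_integral_by_parts_vanishing:
  fixes g h \<phi> \<phi>' :: "real \<Rightarrow> real"
  assumes "a \<le> b"
    and g: "\<And>x. x \<in> {a..b} \<Longrightarrow> (g has_real_derivative h x) (at x)"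
    and \<phi>: "\<And>x. x \<in> {a..b} \<Longrightarrow> (\<phi> has_real_derivative \<phi>' x) (at x)"
    and hi: "set_integrable lborel {a..b} (\<lambda>x. h x * \<phi> x)"
    and gi: "set_integrable lborel {a..b} (\<lambda>x. g x * \<phi>' x)"
    and "\<phi> a = 0" "\<phi> b = 0"
  shows "(LINT x:{a..b}|lborel. g x * \<phi>' x) = - (LINT x:{a..b}|lborel. h x * \<phi> x)"
proof -
  have "((\<lambda>x. h x * \<phi> x + g x * \<phi>' x) has_integral g b * \<phi> b - g a * \<phi> a) {a..b}"
  proof (rule fundamental_theorem_of_calculus[OF \<open>a \<le> b\<close>])
    fix x assume "x \<in> {a..b}"
    then have "((\<lambda>x. g x * \<phi> x) has_real_derivative h x * \<phi> x + g x * \<phi>' x) (at x)"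
      using DERIV_mult[OF g \<phi>] by (auto simp: algebra_simps)
    then show "((\<lambda>x. g x * \<phi> x) has_vector_derivative h x * \<phi> x + g x * \<phi>' x) (at x within {a..b})"
      by (simp add: has_real_derivative_iff_has_vector_derivative has_vector_derivative_at_within)
  qed
  then have "(LINT x:{a..b}|lborel. h x * \<phi> x + g x * \<phi>' x) = 0"
    using set_borel_integral_eq_integral(2)[OF set_integral_add(1)[OF hi gi]] assms(6,7)
    by (simp add: integral_unique)
  then show ?thesis
    using set_integral_add(2)[OF hi gi] by simp
qed

lemma W11_01_if_classical_W11_on:
  assumes "classical_W11_on {0<..<1} g"
  shows "W11_01 g"
proof -
  obtain h where g: "set_integrable lborel {0<..<1} g"
    and der: "\<And>x. x \<in> {0<..<1} \<Longrightarrow> (g has_real_derivative h x) (at x)"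
    and h: "set_integrable lborel {0<..<1} h"
    using assms unfolding classical_W11_on_def by blast
  have "(LINT x:{0<..<1}|lborel. g x * deriv \<phi> x) = - (LINT x:{0<..<1}|lborel. h x * \<phi> x)"
    if test: "test_fun01 \<phi>" for \<phi>
  proof -
    have "smooth_on UNIV \<phi>" using test unfolding test_fun01_def by blast
    note \<phi>' = smooth_on_has_derivative[OF this]
    have \<phi>: "continuous_on UNIV \<phi>"
      using \<phi>'(1) by (meson DERIV_isCont UNIV_I continuous_at_imp_continuous_on)
    obtain a b where ab: "0 < a" "a < b" "b < 1"
      and zero: "\<And>x. x \<notin> {a<..<b} \<Longrightarrow> \<phi> x = 0 \<and> deriv \<phi> x = 0"
      using test_fun01_support[OF test] by blast
    obtain B1 where B1: "\<And>x. \<bar>\<phi> x\<bar> \<le> B1"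
      by (rule continuous_compact_support_bounded[OF \<phi> compact_Icc, of a b]) (use zero in auto)
    obtain B2 where B2: "\<And>x. \<bar>deriv \<phi> x\<bar> \<le> B2"
      by (rule continuous_compact_support_bounded[OF \<phi>'(2) compact_Icc, of a b]) (use zero in auto)
    have sub: "{a..b} \<subseteq> {0<..<1}" using ab by auto
    have "(LINT x:{a..b}|lborel. g x * deriv \<phi> x) = - (LINT x:{a..b}|lborel. h x * \<phi> x)"
      using ab zero[of a] zero[of b] sub der \<phi>'(1)
        set_integrable_mult_bounded_continuous[OF set_integrable_subset[OF h _ sub] _ \<phi> B1]
        set_integrable_mult_bounded_continuous[OF set_integrable_subset[OF g _ sub] _ \<phi>'(2) B2]
      by (intro set_integral_by_parts_vanishing) auto
    moreover have "(LINT x:{0<..<1}|lborel. f x) = (LINT x:{a..b}|lborel. f x)"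
      if "\<And>x. x \<notin> {a<..<b} \<Longrightarrow> f x = 0" for f :: "real \<Rightarrow> real"
      unfolding set_lebesgue_integral_def
      by (rule Bochner_Integration.integral_cong) (use that sub in \<open>auto simp: indicator_def\<close>)
    ultimately show ?thesis using zero by simp
  qed
  then show ?thesis unfolding W11_01_def using g h by blast
qed

lemma mono_on_tendsto_Inf_at_right:
  fixes f :: "real \<Rightarrow> real"
  assumes "a < b" and mono: "mono_on {a<..<b} f" and "bdd_below (f ` {a<..<b})"
  shows "(f \<longlongrightarrow> Inf (f ` {a<..<b})) (at_right a)"
proof (rule order_tendstoI)
  fix l assume "l < Inf (f ` {a<..<b})"
  then show "eventually (\<lambda>x. l < f x) (at_right a)"
    using cInf_lower[OF _ assms(3)] eventually_at_right_real[OF \<open>a < b\<close>]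
    by (force elim: eventually_mono)
next
  fix u assume "Inf (f ` {a<..<b}) < u"
  then obtain x0 where x0: "x0 \<in> {a<..<b}" "f x0 < u"
    using cInf_less_iff[OF _ assms(3)] \<open>a < b\<close> by auto
  have "\<forall>x\<in>{a<..<x0}. f x < u"
  proof
    fix x assume "x \<in> {a<..<x0}"
    with x0 have "f x \<le> f x0" by (intro mono_onD[OF mono]) auto
    with x0 show "f x < u" by linarith
  qed
  then show "eventually (\<lambda>x. f x < u) (at_right a)"
    using eventually_at_right_real[of a x0] x0 by (force elim: eventually_mono)
qed

lemma mono_on_tendsto_Sup_at_left:
  fixes f :: "real \<Rightarrow> real"
  assumes "a < b" and mono: "mono_on {a<..<b} f" and "bdd_above (f ` {a<..<b})"
  shows "(f \<longlongrightarrow> Sup (f ` {a<..<b})) (at_left b)"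
proof (rule order_tendstoI)
  fix l assume "l < Sup (f ` {a<..<b})"
  then obtain x0 where x0: "x0 \<in> {a<..<b}" "l < f x0"
    using less_cSup_iff[OF _ assms(3)] \<open>a < b\<close> by auto
  have "\<forall>x\<in>{x0<..<b}. l < f x"
  proof
    fix x assume "x \<in> {x0<..<b}"
    with x0 have "f x0 \<le> f x" by (intro mono_onD[OF mono]) auto
    with x0 show "l < f x" by linarith
  qed
  then show "eventually (\<lambda>x. l < f x) (at_left b)"
    using eventually_at_left_real[of x0 b] x0 by (force elim: eventually_mono)
next
  fix u assume "Sup (f ` {a<..<b}) < u"
  then show "eventually (\<lambda>x. f x < u) (at_left b)"
    using cSup_upper[OF _ assms(3)] eventually_at_left_real[OF \<open>a < b\<close>]
    by (force elim: eventually_mono)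
qed

lemma set_integrable_derivative_if_mono_on:
  fixes f f' :: "real \<Rightarrow> real"
  assumes "a < b"
    and der: "\<And>x. x \<in> {a<..<b} \<Longrightarrow> (f has_real_derivative f' x) (at x)"
    and cont: "continuous_on {a<..<b} f'"
    and mono: "mono_on {a<..<b} f" and bnd: "bounded (f ` {a<..<b})"
  shows "set_integrable lborel {a<..<b} f'"
proof -
  have "0 \<le> f' x" if "x \<in> {a<..<b}" for x
    using mono_on_imp_deriv_nonneg[OF mono der[OF that]] that by simp
  moreover have "isCont f' x" if "x \<in> {a<..<b}" for x
    using cont that by (simp add: continuous_on_eq_continuous_at)
  ultimately have "set_integrable lborel (einterval a b) f'"
    using mono_on_tendsto_Inf_at_right[OF \<open>a < b\<close> mono] mono_on_tendsto_Sup_at_left[OF \<open>a < b\<close> mono]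
      bnd \<open>a < b\<close> der bounded_imp_bdd_above bounded_imp_bdd_below
    by (intro interval_integral_FTC_nonneg(1)[where F=f]) (auto simp: ereal_tendsto_simps)
  then show ?thesis by simp
qed

lemma classical_W11_on_if_monotone:
  fixes f :: "real \<Rightarrow> real"
  assumes "a < b" and C1: "f C1_differentiable_on {a<..<b}"
    and mono: "mono_on {a<..<b} f \<or> antimono_on {a<..<b} f"
    and bnd: "bounded (f ` {a<..<b})"
  shows "classical_W11_on {a<..<b} f"
proof -
  obtain f' where der: "\<And>x. x \<in> {a<..<b} \<Longrightarrow> (f has_real_derivative f' x) (at x)"
    and cont: "continuous_on {a<..<b} f'"
    using C1 unfolding C1_differentiable_on_def has_real_derivative_iff_has_vector_derivative by blast
  obtain B where "\<And>x. x \<in> {a<..<b} \<Longrightarrow> \<bar>f x\<bar> \<le> B"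
    using bnd unfolding bounded_iff by (auto simp del: greaterThanLessThan_iff)
  moreover have "continuous_on {a<..<b} f"
    using der by (meson DERIV_isCont continuous_at_imp_continuous_on)
  ultimately have "set_integrable lborel {a<..<b} f"
    by (rule set_integrable_bounded_continuous[rotated])
  moreover have "set_integrable lborel {a<..<b} f'"
    using mono
  proof
    assume "mono_on {a<..<b} f"
    then show ?thesis using set_integrable_derivative_if_mono_on[OF \<open>a < b\<close> der cont _ bnd] by blast
  next
    assume "antimono_on {a<..<b} f"
    then have "mono_on {a<..<b} (\<lambda>x. - f x)"
      by (simp add: monotone_on_def)
    moreover have "bounded ((\<lambda>x. - f x) ` {a<..<b})"
      using bnd by simp
    ultimately have "set_integrable lborel {a<..<b} (\<lambda>x. - f' x)"
      using der cont
      by (intro set_integrable_derivative_if_mono_on[OF \<open>a < b\<close>, where f="\<lambda>x. - f x"])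
        (auto intro: DERIV_minus continuous_intros)
    from set_integrable_mult_right[OF this, of "-1"] show ?thesis by simp
  qed
  ultimately show ?thesis unfolding classical_W11_on_def using der by blast
qed

lemma classical_W11_on_add:
  assumes "classical_W11_on S f" and "classical_W11_on S g"
  shows "classical_W11_on S (\<lambda>x. f x + g x)"
proof -
  obtain f' g' where "\<forall>x\<in>S. (f has_real_derivative f' x) (at x)" "set_integrable lborel S f'"
    and "\<forall>x\<in>S. (g has_real_derivative g' x) (at x)" "set_integrable lborel S g'"
    using assms unfolding classical_W11_on_def by blast
  then show ?thesis
    using assms unfolding classical_W11_on_def
    by (intro conjI exI[of _ "\<lambda>x. f' x + g' x"] set_integral_add) (auto intro: DERIV_add)
qed

lemma classical_W11_on_cong:
  assumes "classical_W11_on S f" and "open S" and "\<And>x. x \<in> S \<Longrightarrow> f x = g x"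
  shows "classical_W11_on S g"
proof -
  obtain f' where "\<forall>x\<in>S. (f has_real_derivative f' x) (at x)" "set_integrable lborel S f'"
    and "set_integrable lborel S f"
    using assms(1) unfolding classical_W11_on_def by blast
  moreover have "(g has_real_derivative f' x) (at x)" if "(f has_real_derivative f' x) (at x)" "x \<in> S" for x
    using has_field_derivative_transform_within_open[OF that(1) \<open>open S\<close> that(2)] assms(3) by blast
  ultimately show ?thesis
    unfolding classical_W11_on_def using assms(3) by (auto cong: set_integrable_cong)
qed

lemma set_integrable_open_interval_split:
  fixes f :: "real \<Rightarrow> real"
  assumes "a < c" "c \<le> d" "d < b"
    and "set_integrable lborel {a<..<c} f" and "continuous_on {c..d} f"
    and "set_integrable lborel {d<..<b} f"
  shows "set_integrable lborel {a<..<b} f"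
proof -
  have "set_integrable lborel ({a<..<c} \<union> {c..d} \<union> {d<..<b}) f"
    using assms borel_integrable_atLeastAtMost' by (intro set_integrable_Un) auto
  moreover have "{a<..<c} \<union> {c..d} \<union> {d<..<b} = {a<..<b}"
    using assms(1-3) by auto
  ultimately show ?thesis by simp
qed

lemma classical_W11_on_glue:
  fixes f :: "real \<Rightarrow> real"
  assumes "a < c" "c \<le> d" "d < b" and C1: "f C1_differentiable_on {a<..<b}"
    and left: "classical_W11_on {a<..<c} f" and right: "classical_W11_on {d<..<b} f"
  shows "classical_W11_on {a<..<b} f"
proof -
  obtain f' where der: "\<And>x. x \<in> {a<..<b} \<Longrightarrow> (f has_real_derivative f' x) (at x)"
    and cont: "continuous_on {a<..<b} f'"
    using C1 unfolding C1_differentiable_on_def has_real_derivative_iff_has_vector_derivative by blast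
  have sub: "{c..d} \<subseteq> {a<..<b}" "{a<..<c} \<subseteq> {a<..<b}" "{d<..<b} \<subseteq> {a<..<b}"
    using assms(1-3) by auto
  have f'_integrable: "set_integrable lborel S f'"
    if W11: "classical_W11_on S f" and "S \<subseteq> {a<..<b}" for S
  proof -
    obtain g' where "\<forall>x\<in>S. (f has_real_derivative g' x) (at x)" "set_integrable lborel S g'"
      using W11 unfolding classical_W11_on_def by blast
    moreover have "g' x = f' x" if "(f has_real_derivative g' x) (at x)" "x \<in> S" for x
      using DERIV_unique[OF that(1) der] that(2) \<open>S \<subseteq> {a<..<b}\<close> by blast
    ultimately show ?thesis by (auto cong: set_integrable_cong)
  qed
  have "set_integrable lborel {a<..<b} f'"
    using assms(1-3) continuous_on_subset[OF cont sub(1)]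
      f'_integrable[OF left sub(2)] f'_integrable[OF right sub(3)]
    by (intro set_integrable_open_interval_split[of a c d b]) auto
  moreover have "continuous_on {a<..<b} f"
    using der by (meson DERIV_isCont continuous_at_imp_continuous_on)
  then have "set_integrable lborel {a<..<b} f"
    using left right assms(1-3) continuous_on_subset[OF _ sub(1)]
    by (intro set_integrable_open_interval_split[of a c d b]) (auto simp: classical_W11_on_def)
  ultimately show ?thesis unfolding classical_W11_on_def using der by blast
qed

section \<open>Power series with bounded coefficients\<close>

definition power_series :: "(nat \<Rightarrow> real) \<Rightarrow> real \<Rightarrow> real" where
  "power_series c y = (\<Sum>k. c k * y ^ k)"

lemma summable_power_series_bounded:
  fixes c :: "nat \<Rightarrow> real"
  assumes "\<And>k. \<bar>c k\<bar> \<le> B" and "\<bar>y\<bar> < 1"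
  shows "summable (\<lambda>k. c k * y ^ k)"
proof (rule summable_comparison_test)
  show "summable (\<lambda>k. B * \<bar>y\<bar> ^ k)" using assms(2) by (intro summable_mult summable_geometric) auto
  show "\<exists>N. \<forall>k\<ge>N. norm (c k * y ^ k) \<le> B * \<bar>y\<bar> ^ k"
    using assms(1) by (auto simp: abs_mult power_abs intro!: mult_right_mono)
qed

lemma summable_power_series_diffs_bounded:
  fixes c :: "nat \<Rightarrow> real"
  assumes "\<And>k. \<bar>c k\<bar> \<le> B" and "\<bar>y\<bar> < 1"
  shows "summable (\<lambda>k. diffs c k * y ^ k)"
  by (rule termdiff_converges[where K=1]) (use assms summable_power_series_bounded[OF assms(1)] in auto)

lemma power_series_has_derivative:
  fixes c :: "nat \<Rightarrow> real"
  assumes "\<And>k. \<bar>c k\<bar> \<le> B" and "\<bar>y\<bar> < 1"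
  shows "(power_series c has_real_derivative power_series (diffs c) y) (at y)"
  unfolding power_series_def
  by (rule termdiffs_strong'[where K=1]) (use assms summable_power_series_bounded[OF assms(1)] in auto)

lemma power_series_diffs_has_derivative:
  fixes c :: "nat \<Rightarrow> real"
  assumes "\<And>k. \<bar>c k\<bar> \<le> B" and "\<bar>y\<bar> < 1"
  shows "(power_series (diffs c) has_real_derivative power_series (diffs (diffs c)) y) (at y)"
  unfolding power_series_def
  by (rule termdiffs_strong'[where K=1]) (use assms summable_power_series_diffs_bounded[OF assms(1)] in auto)

lemma power_series_square_has_derivative:
  fixes c :: "nat \<Rightarrow> real"
  assumes "\<And>k. \<bar>c k\<bar> \<le> B" and "\<bar>v\<bar> < 1"
  shows "((\<lambda>v. power_series c (v\<^sup>2)) has_real_derivative 2 * v * power_series (diffs c) (v\<^sup>2)) (at v)"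
proof -
  have "\<bar>v\<^sup>2\<bar> < 1" using assms(2) by (simp add: abs_square_less_1)
  note DERIV_chain2[where f="power_series c" and g="\<lambda>v. v\<^sup>2",
      OF power_series_has_derivative[of c B, OF assms(1) this]]
  moreover have "((\<lambda>v. v\<^sup>2) has_real_derivative 2 * v) (at v)"
    by (auto intro!: derivative_eq_intros)
  ultimately show ?thesis by (simp add: mult.commute)
qed

lemma power_series_square_C1:
  fixes c :: "nat \<Rightarrow> real"
  assumes "\<And>k. \<bar>c k\<bar> \<le> B"
  shows "(\<lambda>v. power_series c (v\<^sup>2)) C1_differentiable_on {-1<..<1}"
  unfolding C1_differentiable_on_def has_real_derivative_iff_has_vector_derivative[symmetric]
proof (intro exI conjI ballI)
  fix v :: real assume "v \<in> {-1<..<1}"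
  then show "((\<lambda>v. power_series c (v\<^sup>2)) has_real_derivative 2 * v * power_series (diffs c) (v\<^sup>2)) (at v)"
    using power_series_square_has_derivative[of c B, OF assms] by (simp add: abs_less_iff)
next
  have "isCont (power_series (diffs c)) y" if "\<bar>y\<bar> < 1" for y
    using DERIV_isCont[OF power_series_diffs_has_derivative[of c B, OF assms that]] .
  moreover have "\<bar>v\<^sup>2\<bar> < 1" if "v \<in> {-1<..<1}" for v :: real
    using that by (simp add: abs_square_less_1 abs_less_iff)
  ultimately show "continuous_on {-1<..<1} (\<lambda>v. 2 * v * power_series (diffs c) (v\<^sup>2))"
    by (intro continuous_at_imp_continuous_on ballI continuous_intros isCont_o2[where f="\<lambda>v. v\<^sup>2"]) auto
qed

lemma power_series_mono:
  fixes c :: "nat \<Rightarrow> real"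
  assumes "\<And>k. 0 \<le> c k" "\<And>k. c k \<le> B" and "0 \<le> y" "y \<le> z" "z < 1"
  shows "power_series c y \<le> power_series c z"
  unfolding power_series_def
  using assms by (intro suminf_le summable_power_series_bounded[of c B])
    (auto intro!: mult_left_mono power_mono)

lemma power_series_minus_const_bounds:
  fixes c :: "nat \<Rightarrow> real"
  assumes "\<And>k. 0 \<le> c k" "\<And>k. c k \<le> B" and "0 \<le> y" "y < 1"
  shows "0 \<le> power_series c y - c 0" and "power_series c y - c 0 \<le> y * power_series (diffs c) y"
proof -
  have B: "\<bar>c k\<bar> \<le> B" for k using assms(1,2)[of k] by simp
  have s: "summable (\<lambda>k. c k * y ^ k)" and sd: "summable (\<lambda>k. diffs c k * y ^ k)"
    using assms(3,4) by (auto intro: summable_power_series_bounded[OF B] summable_power_series_diffs_bounded[OF B])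
  have tail: "(\<Sum>k. c (Suc k) * y ^ Suc k) = power_series c y - c 0"
    using suminf_split_head[OF s] unfolding power_series_def by simp
  have s1: "summable (\<lambda>k. c (Suc k) * y ^ Suc k)"
    using s by (subst summable_Suc_iff)
  show "0 \<le> power_series c y - c 0"
    unfolding tail[symmetric] using assms s1 by (intro suminf_nonneg) auto
  have "(\<Sum>k. c (Suc k) * y ^ Suc k) \<le> (\<Sum>k. y * (diffs c k * y ^ k))"
  proof (rule suminf_le)
    fix k
    have "c (Suc k) \<le> of_nat (Suc k) * c (Suc k)"
      using assms(1)[of "Suc k"] by (simp add: algebra_simps)
    then have "c (Suc k) * y ^ Suc k \<le> of_nat (Suc k) * c (Suc k) * y ^ Suc k"
      using assms(3) by (simp add: mult_right_mono)
    then show "c (Suc k) * y ^ Suc k \<le> y * (diffs c k * y ^ k)"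
      by (simp add: diffs_def algebra_simps)
  qed (use s1 sd summable_mult in auto)
  also have "\<dots> = y * power_series (diffs c) y"
    unfolding power_series_def using sd by (rule suminf_mult)
  finally show "power_series c y - c 0 \<le> y * power_series (diffs c) y"
    using tail by simp
qed

lemma power_series_diffs_nonneg:
  fixes c :: "nat \<Rightarrow> real"
  assumes "\<And>k. 0 \<le> c k" "\<And>k. c k \<le> B" and "0 \<le> y" "y < 1"
  shows "0 \<le> power_series (diffs c) y"
proof -
  have "\<bar>c k\<bar> \<le> B" for k using assms(1,2)[of k] by simp
  then show ?thesis
    unfolding power_series_def using assms
    by (intro suminf_nonneg summable_power_series_diffs_bounded) (auto simp: diffs_def)
qed

lemma ln_inverse_mult_power_series_square_mono:
  fixes c :: "nat \<Rightarrow> real"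
  assumes nonneg: "\<And>k. 0 \<le> c k" and bound: "\<And>k. c k \<le> B"
  shows "mono_on {0<..<1/2} (\<lambda>v. ln (1 / v) * (power_series c (v\<^sup>2) - c 0))"
proof (rule monotone_onI)
  have abs_bound: "\<bar>c k\<bar> \<le> B" for k using nonneg[of k] bound[of k] by simp
  define f' where "f' v = - 1 / v * (power_series c (v\<^sup>2) - c 0)
    + ln (1 / v) * (2 * v * power_series (diffs c) (v\<^sup>2))" for v
  have deriv: "((\<lambda>v. ln (1 / v) * (power_series c (v\<^sup>2) - c 0)) has_real_derivative f' z) (at z)"
    if "0 < z" "z < 1" for z
    unfolding f'_def using that power_series_square_has_derivative[of c B z, OF abs_bound]
    by (auto intro!: derivative_eq_intros simp: field_simps)
  fix x y :: real assume x: "x \<in> {0<..<1/2}" and y: "y \<in> {0<..<1/2}" and "x \<le> y"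
  show "ln (1 / x) * (power_series c (x\<^sup>2) - c 0) \<le> ln (1 / y) * (power_series c (y\<^sup>2) - c 0)"
  proof (rule DERIV_nonneg_imp_increasing_open[OF \<open>x \<le> y\<close>])
    fix z assume "x < z" "z < y"
    then have z: "0 < z" "z < 1/2" using x y by auto
    then have z2: "0 \<le> z\<^sup>2" "z\<^sup>2 < 1" by (auto simp: power_less_one_iff)
    define D where "D = power_series (diffs c) (z\<^sup>2)"
    have "0 \<le> D"
      unfolding D_def using power_series_diffs_nonneg[OF nonneg bound z2] .
    have "power_series c (z\<^sup>2) - c 0 \<le> z\<^sup>2 * D"
      unfolding D_def using power_series_minus_const_bounds(2)[OF nonneg bound z2] .
    then have "- 1 / z * (power_series c (z\<^sup>2) - c 0) \<ge> - z * D"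
      using z by (simp add: field_simps power2_eq_square)
    moreover have "1 \<le> 2 * ln (1 / z)"
    proof -
      have "ln 2 \<le> ln (1 / z)" using z by (simp add: field_simps)
      then show ?thesis using ln2_ge_two_thirds by linarith
    qed
    then have "z * D \<le> ln (1 / z) * (2 * z * D)"
      using mult_right_mono[of 1 "2 * ln (1 / z)" "z * D"] \<open>0 \<le> D\<close> z by (simp add: algebra_simps)
    ultimately have "0 \<le> f' z" unfolding f'_def D_def by linarith
    then show "\<exists>d. ((\<lambda>v. ln (1 / v) * (power_series c (v\<^sup>2) - c 0)) has_real_derivative d) (at z) \<and> 0 \<le> d"
      using deriv z by force
  next
    show "continuous_on {x..y} (\<lambda>v. ln (1 / v) * (power_series c (v\<^sup>2) - c 0))"
      using x y by (intro continuous_at_imp_continuous_on ballI DERIV_isCont[OF deriv]) auto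
  qed
qed

section \<open>Expansion of the kernel \<open>1 / (u\<^sup>2 - y)\<close>\<close>

locale kernel_weight =
  fixes w :: "real \<Rightarrow> real"
  assumes measurable [measurable]: "w \<in> borel_measurable borel"
    and nonneg: "\<And>u. 1 < u \<Longrightarrow> 0 \<le> w u"
    and integrable: "set_integrable lborel {1<..} (\<lambda>u. w u / u\<^sup>2)"
begin

definition moment :: "nat \<Rightarrow> real" where
  "moment k = (LINT u:{1<..}|lborel. w u / u\<^sup>2 * (1 / u\<^sup>2) ^ k)"

lemma set_integrable_moment_term:
  assumes "0 \<le> z" "z \<le> 1"
  shows "set_integrable lborel {1<..} (\<lambda>u. w u / u\<^sup>2 * (1 / u\<^sup>2) ^ k * z ^ k)"
proof (rule set_integrable_bound[OF integrable])
  show "set_borel_measurable lborel {1<..} (\<lambda>u. w u / u\<^sup>2 * (1 / u\<^sup>2) ^ k * z ^ k)"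
    unfolding set_borel_measurable_def by measurable
  show "AE u in lborel. u \<in> {1<..} \<longrightarrow> norm (w u / u\<^sup>2 * (1 / u\<^sup>2) ^ k * z ^ k) \<le> norm (w u / u\<^sup>2)"
  proof (intro AE_I2 impI)
    fix u :: real assume "u \<in> {1<..}"
    then have w: "0 \<le> w u / u\<^sup>2" and t: "(1 / u\<^sup>2) ^ k * z ^ k \<le> 1" "0 \<le> (1 / u\<^sup>2) ^ k * z ^ k"
      using nonneg assms by (auto intro!: mult_le_one power_le_one)
    show "norm (w u / u\<^sup>2 * (1 / u\<^sup>2) ^ k * z ^ k) \<le> norm (w u / u\<^sup>2)"
      using mult_left_le[OF t(1) w] mult_nonneg_nonneg[OF w t(2)] w
      by (metis mult.assoc abs_of_nonneg real_norm_def)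
  qed
qed

lemma moment_nonneg: "0 \<le> moment k"
  unfolding moment_def set_lebesgue_integral_def
  by (rule Bochner_Integration.integral_nonneg) (auto simp: indicator_def nonneg)

lemma moment_le_moment_0: "moment k \<le> moment 0"
  unfolding moment_def
proof (rule set_integral_mono)
  show "set_integrable lborel {1<..} (\<lambda>u. w u / u\<^sup>2 * (1 / u\<^sup>2) ^ k)"
    using set_integrable_moment_term[of 1 k] by simp
  show "set_integrable lborel {1<..} (\<lambda>u. w u / u\<^sup>2 * (1 / u\<^sup>2) ^ 0)"
    using integrable by simp
  fix u :: real assume "u \<in> {1<..}"
  then have "(1 / u\<^sup>2) ^ k \<le> 1" and "0 \<le> w u / u\<^sup>2"
    using nonneg by (auto intro!: power_le_one)
  from mult_left_le[OF this]
  show "w u / u\<^sup>2 * (1 / u\<^sup>2) ^ k \<le> w u / u\<^sup>2 * (1 / u\<^sup>2) ^ 0"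
    by simp
qed

lemma abs_moment_le: "\<bar>moment k\<bar> \<le> moment 0"
  using moment_nonneg moment_le_moment_0 by simp

lemma moment_0_le_power_series: "0 \<le> y \<Longrightarrow> y < 1 \<Longrightarrow> moment 0 \<le> power_series moment y"
  using power_series_minus_const_bounds(1)[where c=moment, OF moment_nonneg moment_le_moment_0] by simp

lemma integral_eq_power_series:
  assumes "0 \<le> y" "y < 1"
  shows "set_integrable lborel {1<..} (\<lambda>u. w u / (u\<^sup>2 - y))"
    and "(LINT u:{1<..}|lborel. w u / (u\<^sup>2 - y)) = power_series moment y"
proof -
  define f where "f k u = indicator {1<..} u *\<^sub>R (w u / u\<^sup>2 * (1 / u\<^sup>2) ^ k * y ^ k)" for k u
  have f_integrable: "integrable lborel (f k)" for k
    using set_integrable_moment_term[of y k] assms unfolding set_integrable_def f_def by simp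
  have f_integral: "integral\<^sup>L lborel (f k) = moment k * y ^ k" for k
    unfolding f_def moment_def set_lebesgue_integral_def[symmetric] by (rule set_integral_mult_left)
  have f_nonneg: "0 \<le> f k u" for k u
    using nonneg assms by (auto simp: f_def indicator_def)
  have f_sums: "(\<lambda>k. f k u) sums (indicator {1<..} u *\<^sub>R (w u / (u\<^sup>2 - y)))" for u
  proof (cases "1 < u")
    case True
    then have "1 < u\<^sup>2" by (simp add: less_1_mult power2_eq_square)
    then have "norm (y / u\<^sup>2) < 1" using assms by (auto simp: abs_of_nonneg divide_less_eq)
    from sums_mult[OF geometric_sums[OF this], of "w u / u\<^sup>2"]
    show ?thesis
      using True \<open>1 < u\<^sup>2\<close> assms by (simp add: f_def power_divide field_simps)
  qed (simp add: f_def)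
  have "summable (\<lambda>k. \<integral>u. norm (f k u) \<partial>lborel)"
  proof (rule summable_comparison_test)
    show "summable (\<lambda>k. moment 0 * y ^ k)"
      using assms by (intro summable_mult summable_geometric) auto
    show "\<exists>N. \<forall>k\<ge>N. norm (\<integral>u. norm (f k u) \<partial>lborel) \<le> moment 0 * y ^ k"
      using f_nonneg f_integral moment_nonneg moment_le_moment_0 assms by (simp add: mult_right_mono)
  qed
  moreover have "AE u in lborel. summable (\<lambda>k. norm (f k u))"
    using f_sums f_nonneg by (auto intro!: AE_I2 sums_summable)
  moreover have "(\<lambda>u. \<Sum>k. f k u) = (\<lambda>u. indicator {1<..} u *\<^sub>R (w u / (u\<^sup>2 - y)))"
    using f_sums by (auto simp: sums_iff)
  moreover note integrable_suminf[where f=f, OF f_integrable] integral_suminf[where f=f, OF f_integrable]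
  ultimately show "set_integrable lborel {1<..} (\<lambda>u. w u / (u\<^sup>2 - y))"
    and "(LINT u:{1<..}|lborel. w u / (u\<^sup>2 - y)) = power_series moment y"
    unfolding set_integrable_def set_lebesgue_integral_def power_series_def f_integral by auto
qed

end

lemma L_measurable [measurable]: "L \<in> borel_measurable borel"
  unfolding L_def by measurable

lemma L_nonneg: "1 < u \<Longrightarrow> 0 \<le> L u"
  unfolding L_def by simp

lemma L_over_square_integral:
  shows "set_integrable lborel {1<..} (\<lambda>u. L u / u\<^sup>2)"
    and "(LINT u:{1<..}|lborel. L u / u\<^sup>2) = 2 * ln 2"
proof -
  define F where "F u = - (ln (u + 1) - ln (u - 1)) / u + 2 * ln u - ln (u - 1) - ln (u + 1)" for u :: real
  have F_deriv: "(F has_real_derivative L u / u\<^sup>2) (at u)" if "1 < u" for u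
  proof -
    have "(F has_real_derivative ((1 / (u - 1) - 1 / (u + 1)) * u - (ln (u - 1) - ln (u + 1))) / (u * u)
        + 2 / u - 1 / (u - 1) - 1 / (u + 1)) (at u)"
      unfolding F_def using that by (auto intro!: derivative_eq_intros)
    moreover have "((1 / (u - 1) - 1 / (u + 1)) * u - (ln (u - 1) - ln (u + 1))) / (u * u)
        + 2 / u - 1 / (u - 1) - 1 / (u + 1) = L u / u\<^sup>2"
    proof -
      have "u - 1 \<noteq> 0" "u + 1 \<noteq> 0" "u \<noteq> 0" using that by auto
      then have "1 / (u - 1) / u = 1 / (u - 1) - 1 / u" "1 / (u + 1) / u = 1 / u - 1 / (u + 1)"
        by (simp_all add: field_simps)
      then have "(1 / (u - 1) - 1 / (u + 1)) / u + 2 / u - 1 / (u - 1) - 1 / (u + 1) = 0"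
        unfolding diff_divide_distrib by simp
      moreover have "L u = ln (u + 1) - ln (u - 1)" using that by (simp add: L_def ln_div)
      ultimately show ?thesis by (simp add: diff_divide_distrib add_divide_distrib power2_eq_square)
    qed
    ultimately show ?thesis by simp
  qed
  have "((F \<circ> real_of_ereal) \<longlongrightarrow> - 2 * ln 2) (at_right 1)"
    unfolding one_ereal_def ereal_tendsto_simps F_def by real_asymp
  moreover have "((F \<circ> real_of_ereal) \<longlongrightarrow> 0) (at_left \<infinity>)"
    unfolding ereal_tendsto_simps F_def by real_asymp
  moreover have "isCont (\<lambda>u. L u / u\<^sup>2) u" if "1 < u" for u
    using that unfolding L_def by (auto intro!: continuous_intros)
  moreover note F_deriv L_nonneg
  ultimately have "set_integrable lborel (einterval 1 \<infinity>) (\<lambda>u. L u / u\<^sup>2)"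
    and "(LBINT u=1..\<infinity>. L u / u\<^sup>2) = 0 - (- 2 * ln 2)"
    by (intro interval_integral_FTC_nonneg; force simp: one_ereal_def)+
  then show "set_integrable lborel {1<..} (\<lambda>u. L u / u\<^sup>2)"
    and "(LINT u:{1<..}|lborel. L u / u\<^sup>2) = 2 * ln 2"
    by (simp_all add: interval_lebesgue_integral_le_eq one_ereal_def)
qed

lemma set_integrable_inverse_mult_sqrt:
  "set_integrable lborel {1<..} (\<lambda>u::real. 1 / (u * sqrt (u - 1)))"
proof -
  have "((\<lambda>u. 2 * arctan (sqrt (u - 1))) has_real_derivative 1 / (x * sqrt (x - 1))) (at x)"
    if "1 < x" for x
  proof -
    have "((\<lambda>u. 2 * arctan (sqrt (u - 1))) has_real_derivative
        2 * (inverse (1 + (sqrt (x - 1))\<^sup>2) * (inverse (sqrt (x - 1)) / 2 * 1))) (at x)"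
      using that by (auto intro!: derivative_eq_intros)
    moreover have "sqrt (x - 1) ^ 2 = x - 1" "sqrt (x - 1) > 0" using that by auto
    ultimately show ?thesis by (simp add: field_simps)
  qed
  moreover have "(((\<lambda>u. 2 * arctan (sqrt (u - 1))) \<circ> real_of_ereal) \<longlongrightarrow> 0) (at_right 1)"
    unfolding one_ereal_def ereal_tendsto_simps by (rule tendsto_eq_intros refl | simp)+
  moreover have "(((\<lambda>u. 2 * arctan (sqrt (u - 1))) \<circ> real_of_ereal) \<longlongrightarrow> pi) (at_left \<infinity>)"
  proof -
    have "filterlim (\<lambda>u::real. sqrt (u - 1)) at_top at_top" by real_asymp
    from tendsto_mult[OF tendsto_const[of 2] filterlim_compose[OF tendsto_arctan_at_top this]]
    show ?thesis unfolding ereal_tendsto_simps by simp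
  qed
  ultimately have "set_integrable lborel (einterval 1 \<infinity>) (\<lambda>u::real. 1 / (u * sqrt (u - 1)))"
    by (intro interval_integral_FTC_nonneg(1)) (auto intro!: continuous_intros simp: one_ereal_def)
  then show ?thesis by (simp add: one_ereal_def)
qed

lemma ln_le_twice_sqrt_minus_one: "0 < (y::real) \<Longrightarrow> ln y \<le> 2 * (sqrt y - 1)"
  using ln_le_minus_one[of "sqrt y"] by (simp add: ln_sqrt)

lemma L_mult_ln_bound:
  assumes "1 < u"
  shows "L u * ln u / (u\<^sup>2 - 1) \<le> 4 / (u * sqrt (u - 1))"
proof -
  define a b c where "a = sqrt (u - 1)" and "b = sqrt (u + 1)" and "c = sqrt u"
  have pos: "0 < a" "0 < b" "1 < c" and sq: "a\<^sup>2 = u - 1" "b\<^sup>2 = u + 1" "c\<^sup>2 = u"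
    using assms by (auto simp: a_def b_def c_def)
  have "L u \<le> 2 * (b / a)"
    using ln_le_twice_sqrt_minus_one[of "(u + 1) / (u - 1)"] assms
    by (simp add: L_def a_def b_def real_sqrt_divide)
  moreover have "ln u \<le> 2 * (a\<^sup>2 / (c + 1))"
  proof -
    have "c - 1 = a\<^sup>2 / (c + 1)" using pos sq by (simp add: field_simps power2_eq_square)
    then show ?thesis using ln_le_twice_sqrt_minus_one[of u] assms by (simp add: c_def)
  qed
  moreover have "0 \<le> L u" "0 \<le> ln u" using assms L_nonneg by auto
  ultimately have "L u * ln u / (a\<^sup>2 * b\<^sup>2) \<le> (2 * (b / a)) * (2 * (a\<^sup>2 / (c + 1))) / (a\<^sup>2 * b\<^sup>2)"
    using pos by (intro divide_right_mono mult_mono) auto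
  moreover have "u\<^sup>2 - 1 = a\<^sup>2 * b\<^sup>2"
    unfolding sq by (simp add: power2_eq_square algebra_simps)
  ultimately have "L u * ln u / (u\<^sup>2 - 1) \<le> (2 * (b / a)) * (2 * (a\<^sup>2 / (c + 1))) / (a\<^sup>2 * b\<^sup>2)"
    by simp
  also have "\<dots> = 4 / (a * (b * (c + 1)))"
  proof -
    have "0 < a * b + a * (b * c)" "0 < a * (a * (b * b)) + a * (a * (b * (b * c)))"
      using pos by (simp_all add: add_pos_pos)
    then show ?thesis using pos by (simp add: field_simps power2_eq_square)
  qed
  also have "\<dots> \<le> 4 / (a * u)"
  proof -
    have "u \<le> b * (c + 1)"
      using mult_mono[of c b c "c + 1"] pos sq by (simp add: b_def c_def power2_eq_square)
    then show ?thesis using pos assms by (intro divide_left_mono mult_left_mono) auto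
  qed
  finally show ?thesis by (simp add: a_def mult.commute)
qed

lemma L_mult_ln_integrable:
  "set_integrable lborel {1<..} (\<lambda>u. L u * ln u / (u\<^sup>2 - 1))"
proof (rule set_integrable_bound[OF set_integrable_mult_right[OF set_integrable_inverse_mult_sqrt, of 4]])
  show "set_borel_measurable lborel {1<..} (\<lambda>u. L u * ln u / (u\<^sup>2 - 1))"
    unfolding set_borel_measurable_def by measurable
  show "AE u in lborel. u \<in> {1<..} \<longrightarrow> norm (L u * ln u / (u\<^sup>2 - 1)) \<le> norm (4 * (1 / (u * sqrt (u - 1))))"
  proof (intro AE_I2 impI)
    fix u :: real assume "u \<in> {1<..}"
    then have "1 < u" "1 < u\<^sup>2" by (auto simp: less_1_mult power2_eq_square)
    then show "norm (L u * ln u / (u\<^sup>2 - 1)) \<le> norm (4 * (1 / (u * sqrt (u - 1))))"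
      using L_mult_ln_bound[of u] L_nonneg[of u] by simp
  qed
qed

lemma L_mult_ln_over_square_integrable:
  "set_integrable lborel {1<..} (\<lambda>u. L u * ln u / u\<^sup>2)"
proof (rule set_integrable_bound[OF L_mult_ln_integrable])
  show "set_borel_measurable lborel {1<..} (\<lambda>u. L u * ln u / u\<^sup>2)"
    unfolding set_borel_measurable_def by measurable
  show "AE u in lborel. u \<in> {1<..} \<longrightarrow> norm (L u * ln u / u\<^sup>2) \<le> norm (L u * ln u / (u\<^sup>2 - 1))"
  proof (intro AE_I2 impI)
    fix u :: real assume "u \<in> {1<..}"
    then have "1 < u" "1 < u\<^sup>2" by (auto simp: less_1_mult power2_eq_square)
    moreover have "0 \<le> L u * ln u" using \<open>1 < u\<close> L_nonneg by simp
    ultimately show "norm (L u * ln u / u\<^sup>2) \<le> norm (L u * ln u / (u\<^sup>2 - 1))"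
      by (simp add: divide_left_mono)
  qed
qed

interpretation L_weight: kernel_weight L
  using L_nonneg L_over_square_integral(1) by unfold_locales auto

interpretation L_ln_weight: kernel_weight "\<lambda>u. L u * ln u"
  using L_nonneg L_mult_ln_over_square_integrable by unfold_locales auto

section \<open>The function \<open>calA\<close>\<close>

(* For 0 <= y < 1 these are the integrals over u > 1 of L u / (u^2 - y) and of
   L u * ln u / (u^2 - y), by kernel_weight.integral_eq_power_series. *)
definition calP :: "real \<Rightarrow> real" where
  "calP = power_series L_weight.moment"

definition calQ :: "real \<Rightarrow> real" where
  "calQ = power_series L_ln_weight.moment"

lemma L_weight_moment_0: "L_weight.moment 0 = 2 * ln 2"
  using L_over_square_integral(2) by (simp add: L_weight.moment_def)

lemma calP_ge: "0 \<le> y \<Longrightarrow> y < 1 \<Longrightarrow> 2 * ln 2 \<le> calP y"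
  using L_weight.moment_0_le_power_series L_weight_moment_0 by (simp add: calP_def)

lemma calA_integrand_eq:
  assumes "1 < u" "0 < v"
  shows "L u * ell u v / (u\<^sup>2 - v\<^sup>2) = ln (1 / v) * (L u / (u\<^sup>2 - v\<^sup>2)) - L u * ln u / (u\<^sup>2 - v\<^sup>2)"
  using assms by (simp add: ell_def ln_div ln_mult algebra_simps diff_divide_distrib)

lemma
  assumes "0 < v" "v < 1"
  shows set_integrable_calA_integrand: "set_integrable lborel {1<..} (\<lambda>u. L u * ell u v / (u\<^sup>2 - v\<^sup>2))"
    and calA_eq: "calA v = ln (1 / v) * calP (v\<^sup>2) - calQ (v\<^sup>2)"
proof -
  have y: "0 \<le> v\<^sup>2" "v\<^sup>2 < 1" using assms by (auto simp: power_less_one_iff)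
  note P = L_weight.integral_eq_power_series[OF y] and Q = L_ln_weight.integral_eq_power_series[OF y]
  have PQ: "set_integrable lborel {1<..} (\<lambda>u. ln (1 / v) * (L u / (u\<^sup>2 - v\<^sup>2)) - L u * ln u / (u\<^sup>2 - v\<^sup>2))"
    using P(1) Q(1) by (intro set_integral_diff(1) set_integrable_mult_right)
  then show "set_integrable lborel {1<..} (\<lambda>u. L u * ell u v / (u\<^sup>2 - v\<^sup>2))"
    using calA_integrand_eq assms by (subst set_integrable_cong[OF refl refl]) auto
  have "calA v = (LINT u:{1<..}|lborel. ln (1 / v) * (L u / (u\<^sup>2 - v\<^sup>2)) - L u * ln u / (u\<^sup>2 - v\<^sup>2))"
    unfolding calA_def using calA_integrand_eq assms by (intro set_lebesgue_integral_cong) auto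
  also have "\<dots> = (LINT u:{1<..}|lborel. ln (1 / v) * (L u / (u\<^sup>2 - v\<^sup>2)))
      - (LINT u:{1<..}|lborel. L u * ln u / (u\<^sup>2 - v\<^sup>2))"
    by (rule set_integral_diff(2)[OF set_integrable_mult_right[OF P(1)] Q(1)])
  also have "\<dots> = ln (1 / v) * calP (v\<^sup>2) - calQ (v\<^sup>2)"
    unfolding set_integral_mult_right P(2) Q(2) calP_def calQ_def ..
  finally show "calA v = ln (1 / v) * calP (v\<^sup>2) - calQ (v\<^sup>2)" .
qed

lemma calA_C1_differentiable_on: "calA C1_differentiable_on {0<..<1}"
proof (rule C1_differentiable_on_cong)
  have "{0<..<1} \<subseteq> {-1<..<(1::real)}" "{0<..<1} \<subseteq> {0::real<..}" by auto
  then show "(\<lambda>v. ln (1 / v) * calP (v\<^sup>2) - calQ (v\<^sup>2)) C1_differentiable_on {0<..<1}"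
    unfolding calP_def calQ_def
    by (intro C1_differentiable_on_diff C1_differentiable_on_mult
        C1_differentiable_on_subset[OF ln_inverse_C1_differentiable_on]
        C1_differentiable_on_subset[OF power_series_square_C1[OF L_weight.abs_moment_le]]
        C1_differentiable_on_subset[OF power_series_square_C1[OF L_ln_weight.abs_moment_le]])
qed (auto simp: calA_eq)

lemma ell_kernel_has_derivative:
  assumes "1 < u" "0 < x" "x < 1"
  shows "((\<lambda>x. ell u x / (u\<^sup>2 - x\<^sup>2)) has_real_derivative
    (2 * x * ell u x - (u\<^sup>2 - x\<^sup>2) / x) / (u\<^sup>2 - x\<^sup>2)\<^sup>2) (at x)"
proof -
  have "((\<lambda>x. ln (1 / (u * x))) has_real_derivative - 1 / x) (at x)"
    using assms by (auto intro!: derivative_eq_intros simp: field_simps)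
  moreover have "((\<lambda>x. u\<^sup>2 - x\<^sup>2) has_real_derivative - (2 * x)) (at x)"
    by (auto intro!: derivative_eq_intros)
  moreover have "x\<^sup>2 < u\<^sup>2"
    using assms by (simp add: power_strict_mono)
  ultimately have "((\<lambda>x. ell u x / (u\<^sup>2 - x\<^sup>2)) has_real_derivative
      ((- 1 / x) * (u\<^sup>2 - x\<^sup>2) - ell u x * (- (2 * x))) / ((u\<^sup>2 - x\<^sup>2) * (u\<^sup>2 - x\<^sup>2))) (at x)"
    unfolding ell_def by (intro DERIV_divide) auto
  moreover have "(- 1 / x) * (u\<^sup>2 - x\<^sup>2) - ell u x * (- (2 * x)) = 2 * x * ell u x - (u\<^sup>2 - x\<^sup>2) / x"
    by (simp add: algebra_simps add_divide_distrib[symmetric])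
  ultimately show ?thesis by (simp add: power2_eq_square mult.commute)
qed

lemma ell_kernel_derivative_numerator_nonpos:
  assumes "1 < u" "0 < x"
  shows "2 * x * ell u x - (u\<^sup>2 - x\<^sup>2) / x \<le> 0"
proof -
  have "2 * ell u x = ln (1 / (u\<^sup>2 * x\<^sup>2))"
    using assms by (simp add: ell_def ln_div ln_mult power2_eq_square)
  also have "\<dots> \<le> 1 / (u\<^sup>2 * x\<^sup>2) - 1"
    using assms by (intro ln_le_minus_one) simp
  finally have "x * (2 * ell u x) \<le> x * (1 / (u\<^sup>2 * x\<^sup>2) - 1)"
    using assms by (intro mult_left_mono) auto
  then have "2 * x * ell u x - (u\<^sup>2 - x\<^sup>2) / x \<le> x * (1 / (u\<^sup>2 * x\<^sup>2) - 1) - (u\<^sup>2 - x\<^sup>2) / x"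
    by simp
  also have "\<dots> = (1 / u\<^sup>2 - u\<^sup>2) / x"
    using assms by (simp add: field_simps power2_eq_square)
  also have "\<dots> \<le> 0"
  proof -
    have "1 \<le> u\<^sup>2" using assms(1) by simp
    moreover from this have "1 / u\<^sup>2 \<le> 1" by (simp add: divide_le_eq_1)
    ultimately show ?thesis using assms(2) by (simp add: divide_nonpos_pos)
  qed
  finally show ?thesis .
qed

lemma ell_kernel_decreasing:
  assumes "1 < u" and "0 < s" "s \<le> t" "t < 1"
  shows "ell u t / (u\<^sup>2 - t\<^sup>2) \<le> ell u s / (u\<^sup>2 - s\<^sup>2)"
proof (rule DERIV_nonpos_imp_decreasing_open[OF \<open>s \<le> t\<close>])
  fix x assume "s < x" "x < t"
  then have "0 < x" "x < 1" using assms by auto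
  then show "\<exists>y. ((\<lambda>x. ell u x / (u\<^sup>2 - x\<^sup>2)) has_real_derivative y) (at x) \<and> y \<le> 0"
    using ell_kernel_has_derivative[OF assms(1)] ell_kernel_derivative_numerator_nonpos[OF assms(1)]
    by (blast intro: divide_nonpos_nonneg zero_le_power2)
next
  show "continuous_on {s..t} (\<lambda>x. ell u x / (u\<^sup>2 - x\<^sup>2))"
    using assms DERIV_isCont[OF ell_kernel_has_derivative[OF assms(1)]]
    by (intro continuous_at_imp_continuous_on ballI) auto
qed

lemma calA_antimono: "antimono_on {0<..<1} calA"
proof (rule monotone_onI)
  fix s t :: real assume "s \<in> {0<..<1}" "t \<in> {0<..<1}" "s \<le> t"
  then show "calA t \<le> calA s"
    unfolding calA_def
  proof (intro set_integral_mono set_integrable_calA_integrand)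
    fix u :: real assume "u \<in> {1<..}"
    then show "L u * ell u t / (u\<^sup>2 - t\<^sup>2) \<le> L u * ell u s / (u\<^sup>2 - s\<^sup>2)"
      using mult_left_mono[OF ell_kernel_decreasing L_nonneg, of u s t] \<open>s \<le> t\<close> \<open>s \<in> _\<close> \<open>t \<in> _\<close>
      by simp
  qed (use \<open>s \<in> _\<close> \<open>t \<in> _\<close> in auto)
qed

lemma calQ_bounds:
  assumes "0 \<le> y" "y < 1"
  shows "0 \<le> calQ y" and "calQ y \<le> (LINT u:{1<..}|lborel. L u * ln u / (u\<^sup>2 - 1))"
proof -
  show "0 \<le> calQ y"
    using L_ln_weight.moment_0_le_power_series[OF assms] L_ln_weight.moment_nonneg[of 0]
    unfolding calQ_def by linarith
  have "calQ y = (LINT u:{1<..}|lborel. L u * ln u / (u\<^sup>2 - y))"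
    unfolding calQ_def using L_ln_weight.integral_eq_power_series(2)[OF assms] by simp
  also have "\<dots> \<le> (LINT u:{1<..}|lborel. L u * ln u / (u\<^sup>2 - 1))"
  proof (rule set_integral_mono[OF L_ln_weight.integral_eq_power_series(1)[OF assms] L_mult_ln_integrable])
    fix u :: real assume "u \<in> {1<..}"
    then have "0 \<le> L u * ln u" "0 < u\<^sup>2 - 1" using L_nonneg by (auto simp: less_1_mult power2_eq_square)
    then show "L u * ln u / (u\<^sup>2 - y) \<le> L u * ln u / (u\<^sup>2 - 1)"
      using assms by (intro divide_left_mono) (auto intro!: mult_pos_pos)
  qed
  finally show "calQ y \<le> (LINT u:{1<..}|lborel. L u * ln u / (u\<^sup>2 - 1))" .
qed

lemma calA_lower_bound:
  assumes "0 < v" "v < 1"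
  shows "- (LINT u:{1<..}|lborel. L u * ln u / (u\<^sup>2 - 1)) \<le> calA v"
proof -
  have y: "0 \<le> v\<^sup>2" "v\<^sup>2 < 1" using assms by (auto simp: power_less_one_iff)
  have "0 \<le> calP (v\<^sup>2)"
    using calP_ge[OF y] ln_ge_zero[of 2] by linarith
  moreover have "0 \<le> ln (1 / v)" using assms by simp
  ultimately show ?thesis
    using calA_eq[OF assms] calQ_bounds(2)[OF y] by (smt (verit) mult_nonneg_nonneg)
qed

lemma classical_W11_on_minus_calQ_square:
  assumes "0 < c" "c < 1"
  shows "classical_W11_on {0<..<c} (\<lambda>v. - calQ (v\<^sup>2))"
proof (rule classical_W11_on_if_monotone)
  have square: "0 \<le> v\<^sup>2" "v\<^sup>2 < 1" if "v \<in> {0<..<c}" for v :: real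
    using that assms by (auto simp: power_less_one_iff)
  show "(\<lambda>v. - calQ (v\<^sup>2)) C1_differentiable_on {0<..<c}"
    unfolding calQ_def using assms
    by (intro C1_differentiable_on_minus C1_differentiable_on_subset[OF
          power_series_square_C1[OF L_ln_weight.abs_moment_le]]) auto
  show "mono_on {0<..<c} (\<lambda>v. - calQ (v\<^sup>2)) \<or> antimono_on {0<..<c} (\<lambda>v. - calQ (v\<^sup>2))"
    unfolding calQ_def using square
    by (intro disjI2 monotone_onI le_imp_neg_le power_series_mono[where c=L_ln_weight.moment,
          OF L_ln_weight.moment_nonneg L_ln_weight.moment_le_moment_0])
       (auto intro: power_mono)
  show "bounded ((\<lambda>v. - calQ (v\<^sup>2)) ` {0<..<c})"
    unfolding bounded_iff using calQ_bounds square
    by (intro exI[of _ "LINT u:{1<..}|lborel. L u * ln u / (u\<^sup>2 - 1)"]) fastforce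
qed (use assms in simp)

lemma classical_W11_on_log_remainder:
  assumes "0 < c" "c < 1/2"
  shows "classical_W11_on {0<..<c} (\<lambda>v. ln (1 / v) * (calP (v\<^sup>2) - 2 * ln 2))"
proof (rule classical_W11_on_if_monotone)
  show "(\<lambda>v. ln (1 / v) * (calP (v\<^sup>2) - 2 * ln 2)) C1_differentiable_on {0<..<c}"
    unfolding calP_def using assms
    by (intro C1_differentiable_on_mult C1_differentiable_on_diff C1_differentiable_on_const
        C1_differentiable_on_subset[OF ln_inverse_C1_differentiable_on]
        C1_differentiable_on_subset[OF power_series_square_C1[OF L_weight.abs_moment_le]]) auto
  have mono: "mono_on {0<..<1/2} (\<lambda>v. ln (1 / v) * (calP (v\<^sup>2) - 2 * ln 2))"
    using ln_inverse_mult_power_series_square_mono[where c=L_weight.moment,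
        OF L_weight.moment_nonneg L_weight.moment_le_moment_0]
    unfolding calP_def L_weight_moment_0 .
  then show "mono_on {0<..<c} (\<lambda>v. ln (1 / v) * (calP (v\<^sup>2) - 2 * ln 2))
      \<or> antimono_on {0<..<c} (\<lambda>v. ln (1 / v) * (calP (v\<^sup>2) - 2 * ln 2))"
  proof -
    have "{0<..<c} \<subseteq> {0<..<1/2}" using assms by auto
    then show ?thesis using mono_on_subset[OF mono] by blast
  qed
  have "0 \<le> ln (1 / v) * (calP (v\<^sup>2) - 2 * ln 2)" if "v \<in> {0<..<c}" for v
    using calP_ge[of "v\<^sup>2"] that assms by (simp add: power_less_one_iff)
  moreover have "ln (1 / v) * (calP (v\<^sup>2) - 2 * ln 2) \<le> ln (1 / c) * (calP (c\<^sup>2) - 2 * ln 2)"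
    if "v \<in> {0<..<c}" for v
    using mono_onD[OF mono] that assms by auto
  ultimately show "bounded ((\<lambda>v. ln (1 / v) * (calP (v\<^sup>2) - 2 * ln 2)) ` {0<..<c})"
    unfolding bounded_iff by (intro exI[of _ "ln (1 / c) * (calP (c\<^sup>2) - 2 * ln 2)"]) force
qed (use assms in simp)

lemma calA_minus_log_near_zero:
  assumes "0 < c" "c < 1/2"
  shows "classical_W11_on {0<..<c} (\<lambda>v. calA v - 2 * ln 2 * ln (1 / v))"
  using classical_W11_on_add[OF classical_W11_on_minus_calQ_square classical_W11_on_log_remainder] assms
  by (rule_tac classical_W11_on_cong) (auto simp: calA_eq algebra_simps)

lemma calA_away_from_zero:
  assumes "0 < c" "c < 1"
  shows "classical_W11_on {c<..<1} calA"
proof (rule classical_W11_on_if_monotone)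
  have sub: "{c<..<1} \<subseteq> {0<..<1}" using assms by auto
  show "calA C1_differentiable_on {c<..<1}"
    by (rule C1_differentiable_on_subset[OF calA_C1_differentiable_on sub])
  show "mono_on {c<..<1} calA \<or> antimono_on {c<..<1} calA"
    using monotone_on_subset[OF calA_antimono sub] by blast
  have "\<bar>calA v\<bar> \<le> \<bar>calA c\<bar> + \<bar>LINT u:{1<..}|lborel. L u * ln u / (u\<^sup>2 - 1)\<bar>"
    if "v \<in> {c<..<1}" for v
    using calA_lower_bound[of v] monotone_onD[OF calA_antimono, of c v]
      that assms by auto
  then show "bounded (calA ` {c<..<1})"
    unfolding bounded_iff by force
qed (use assms in simp)

theorem lemma3:
  fixes \<delta> :: real and \<chi>0 :: "real \<Rightarrow> real"
  assumes "\<delta> > 0" and "2 * \<delta> < 1"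
    and "smooth_on {0<..<1} \<chi>0"
    and "\<And>v. 0 \<le> v \<Longrightarrow> v \<le> \<delta> \<Longrightarrow> \<chi>0 v = 1"
    and "\<And>v. 2 * \<delta> \<le> v \<Longrightarrow> v < 1 \<Longrightarrow> \<chi>0 v = 0"
  shows "W11_01 (\<lambda>v. calA v - 2 * ln 2 * \<chi>0 v * ln (1 / v))"
proof (rule W11_01_if_classical_W11_on, rule classical_W11_on_glue)
  show "0 < \<delta>" "\<delta> \<le> 2 * \<delta>" "2 * \<delta> < 1" using assms(1,2) by auto
  show "(\<lambda>v. calA v - 2 * ln 2 * \<chi>0 v * ln (1 / v)) C1_differentiable_on {0<..<1}"
    using smooth_on_imp_C1_differentiable_on[OF assms(3)] calA_C1_differentiable_on
      C1_differentiable_on_subset[OF ln_inverse_C1_differentiable_on, of "{0<..<1}"]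
    by (auto intro!: C1_differentiable_on_diff C1_differentiable_on_mult simp: subset_eq)
  show "classical_W11_on {0<..<\<delta>} (\<lambda>v. calA v - 2 * ln 2 * \<chi>0 v * ln (1 / v))"
    by (rule classical_W11_on_cong[OF calA_minus_log_near_zero]) (use assms in auto)
  show "classical_W11_on {2 * \<delta><..<1} (\<lambda>v. calA v - 2 * ln 2 * \<chi>0 v * ln (1 / v))"
    by (rule classical_W11_on_cong[OF calA_away_from_zero]) (use assms in auto)
qed

end
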